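(* Let $F_2$ be the free group on $x,y$ and let $w(x,y)=x^{a_1}y^{b_1}x^{a_2}y^{b_2}\cdots x^{a_k}y^{b_k}$ with $k\ge 1$ and all integers $a_i\neq 0$, $b_i\neq 0$. If all $b_i$ are positive, then either the word map $w:\mathrm{SL}(2,\mathbb{C})^2\to\mathrm{SL}(2,\mathbb{C})$ is surjective, or $w=v^2$ for some word $v\neq \mathrm{id}$ in $F_2$.
   Context: The word map $w:\mathrm{SL}(2,\mathbb{C})^2\to \mathrm{SL}(2,\mathbb{C})$ sends $(X,Y)$ to $X^{a_1}Y^{b_1}\cdots X^{a_k}Y^{b_k}$. *)

theory Defs
  imports "HOL-Analysis.Analysis"
begin

text \<open>Free group F_2 on generators x, y: words are lists of letters
  (generator, inverted?); two words are equal in F_2 iff their free reductions agree.\<close>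

datatype gen = GX | GY

type_synonym letter = "gen \<times> bool"

definition inv_letter :: "letter \<Rightarrow> letter" where
  "inv_letter l = (fst l, \<not> snd l)"

fun freduce :: "letter list \<Rightarrow> letter list" where
  "freduce [] = []"
| "freduce (l # w) = (case freduce w of
       [] \<Rightarrow> [l]
     | m # r \<Rightarrow> (if m = inv_letter l then r else l # m # r))"

definition free_eq :: "letter list \<Rightarrow> letter list \<Rightarrow> bool" where
  "free_eq u v \<longleftrightarrow> freduce u = freduce v"

definition gen_pow :: "gen \<Rightarrow> int \<Rightarrow> letter list" where
  "gen_pow g n = (if n \<ge> 0 then replicate (nat n) (g, False) else replicate (nat (- n)) (g, True))"

text \<open>w = x^{a_1} y^{b_1} ... x^{a_k} y^{b_k} (indices 0..k-1).\<close>
definition word_w :: "(nat \<Rightarrow> int) \<Rightarrow> (nat \<Rightarrow> int) \<Rightarrow> nat \<Rightarrow> letter list" where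
  "word_w a b k = concat (map (\<lambda>i. gen_pow GX (a i) @ gen_pow GY (b i)) [0..<k])"

definition SL2 :: "(complex^2^2) set" where
  "SL2 = {M. det M = 1}"

definition letter_eval :: "complex^2^2 \<Rightarrow> complex^2^2 \<Rightarrow> letter \<Rightarrow> complex^2^2" where
  "letter_eval A B l = (let M = (if fst l = GX then A else B) in
     if snd l then matrix_inv M else M)"

definition word_eval :: "complex^2^2 \<Rightarrow> complex^2^2 \<Rightarrow> letter list \<Rightarrow> complex^2^2" where
  "word_eval A B w = foldr (\<lambda>l M. letter_eval A B l ** M) w (mat 1)"

definition word_map_surjective :: "letter list \<Rightarrow> bool" where
  "word_map_surjective w \<longleftrightarrow> (\<forall>g\<in>SL2. \<exists>A\<in>SL2. \<exists>B\<in>SL2. word_eval A B w = g)"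

end

theory Submission
  imports Defs
begin

text \<open>Rewrite w as x^c_1 y x^c_2 y ... x^c_N y, possible because all b_i are positive, and
  let a = c_1 + ... + c_N. At X = diag(l, 1/l) and Y = [[m, t], [0, 1/m]] the word evaluates to an
  upper triangular matrix with diagonal entry l^a m^N and upper right entry t m S(l,m) / (l^a m^N),
  where S(l,m) is the sum over f < N of l^(2(c_1 + ... + c_(f+1))) m^(2f). As every element of
  SL(2,C) is conjugate to an upper triangular matrix, w is surjective once every d \<noteq> 0 is a value
  l^a m^N with S(l,m) \<noteq> 0; for l = 1 this holds unless d = -1 and N is even.
  Suppose S vanishes on the whole curve l^a m^N = -1. Substituting l = x^N, m = z x^(-a) with
  z^N = -1 gives a Laurent polynomial in x that vanishes identically, so for every value of the
  height h(f) = N (c_1 + ... + c_(f+1)) - a f the sum of z^(2f) over all f of that height is 0.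
  Since z^2 runs through all roots of u^(N/2) = -1, this forces h to be N/2-periodic, hence c is
  the square of its first half and w = v^2 with v = x^c_1 y ... x^c_(N/2) y, which is nontrivial
  because its exponent sum in y is N/2.\<close>

definition mat2 :: "'a::zero \<Rightarrow> 'a \<Rightarrow> 'a \<Rightarrow> 'a \<Rightarrow> 'a^2^2" where
  "mat2 a b c d = (\<chi> i j. if i = 1 then (if j = 1 then a else b) else (if j = 1 then c else d))"

lemma mat2_nth [simp]:
  "mat2 a b c d $ 1 $ 1 = a" "mat2 a b c d $ 1 $ 2 = b"
  "mat2 a b c d $ 2 $ 1 = c" "mat2 a b c d $ 2 $ 2 = d"
  by (simp_all add: mat2_def)

lemma mat2_entries: "M = mat2 (M$1$1) (M$1$2) (M$2$1) (M$2$2)"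
  by (simp add: mat2_def vec_eq_iff forall_2)

lemma mat2_eq_iff: "mat2 a b c d = mat2 a' b' c' d' \<longleftrightarrow> a = a' \<and> b = b' \<and> c = c' \<and> d = d'"
  by (metis mat2_nth)

lemma mat2_mult:
  "mat2 a b c d ** mat2 a' b' c' d' = mat2 (a*a' + b*c') (a*b' + b*d') (c*a' + d*c') (c*b' + d*d')"
  by (simp add: matrix_matrix_mult_def vec_eq_iff forall_2 sum_2 mat2_def)

lemma mat_1_eq_mat2: "mat 1 = mat2 1 0 0 1"
  by (simp add: mat_def vec_eq_iff forall_2 mat2_def)

lemma det_mat2: "det (mat2 a b c d) = a*d - b*c"
  by (simp add: det_2)

lemma matrix_inv_unique:
  fixes A B :: "'a::semiring_1^'n^'n"
  assumes AB: "A ** B = mat 1" and BA: "B ** A = mat 1"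
  shows "matrix_inv A = B"
proof -
  have inv: "A ** matrix_inv A = mat 1 \<and> matrix_inv A ** A = mat 1"
    unfolding matrix_inv_def using AB BA by (rule someI[of _ B, OF conjI])
  have "matrix_inv A = matrix_inv A ** (A ** B)" using AB by simp
  also have "\<dots> = B" using inv by (simp add: matrix_mul_assoc)
  finally show ?thesis .
qed

lemma matrix_inv_conj:
  fixes P Q M :: "'a::semiring_1^'n^'n"
  assumes PQ: "P ** Q = mat 1" and QP: "Q ** P = mat 1" and M: "invertible M"
  shows "matrix_inv (P ** M ** Q) = P ** matrix_inv M ** Q"
proof (rule matrix_inv_unique)
  have inv: "M ** matrix_inv M = mat 1" "matrix_inv M ** M = mat 1"
    using M unfolding invertible_def matrix_inv_def by (metis (mono_tags, lifting) someI_ex)+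
  have "P ** M ** Q ** (P ** matrix_inv M ** Q) = P ** (M ** (Q ** P) ** matrix_inv M) ** Q"
    by (simp add: matrix_mul_assoc)
  then show "P ** M ** Q ** (P ** matrix_inv M ** Q) = mat 1"
    using PQ QP inv by simp
  have "P ** matrix_inv M ** Q ** (P ** M ** Q) = P ** (matrix_inv M ** (Q ** P) ** M) ** Q"
    by (simp add: matrix_mul_assoc)
  then show "P ** matrix_inv M ** Q ** (P ** M ** Q) = mat 1"
    using PQ QP inv by simp
qed

definition utri :: "'a::field \<Rightarrow> 'a \<Rightarrow> 'a^2^2" where
  "utri p q = mat2 p q 0 (1/p)"

lemma det_utri: "p \<noteq> 0 \<Longrightarrow> det (utri p q) = 1"
  by (simp add: utri_def det_mat2)

lemma utri_mult: "p \<noteq> 0 \<Longrightarrow> p' \<noteq> 0 \<Longrightarrow> utri p q ** utri p' q' = utri (p*p') (p*q' + q/p')"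
  by (simp add: utri_def mat2_mult mat2_eq_iff divide_simps)

lemma mat_1_eq_utri: "mat 1 = utri 1 0"
  by (simp add: utri_def mat_1_eq_mat2)

lemma utri_eq_iff: "utri p q = utri p' q' \<longleftrightarrow> p = p' \<and> q = q'"
  by (auto simp: utri_def mat2_eq_iff)

lemma matrix_inv_utri: "p \<noteq> 0 \<Longrightarrow> matrix_inv (utri p q) = utri (1/p) (- q)"
  by (rule matrix_inv_unique) (simp_all add: utri_mult mat_1_eq_utri utri_eq_iff)

lemma SL2_conj_utri:
  fixes g :: "complex^2^2"
  assumes "det g = 1"
  obtains P Q d c where "P ** Q = mat 1" "Q ** P = mat 1" "d \<noteq> 0" "g = P ** utri d c ** Q"
proof -
  obtain a b e f where g: "g = mat2 a b e f" by (metis mat2_entries)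
  have det: "a*f - b*e = 1" using assms g by (simp add: det_mat2)
  show ?thesis
  proof (cases "e = 0")
    case True
    have "a \<noteq> 0" using det True by auto
    moreover have "f = 1/a" using det True \<open>a \<noteq> 0\<close> by (simp add: field_simps mult.commute)
    ultimately show ?thesis using True g by (intro that[of "mat 1" "mat 1" a b]) (simp_all add: utri_def)
  next
    case False
    \<comment> \<open>\<open>d\<close> is an eigenvalue of \<open>g\<close>; the first column of \<open>P\<close> is an eigenvector for it.\<close>
    define d where "d = ((a + f) + csqrt ((a + f)^2 - 4)) / 2"
    have char: "d^2 - (a + f)*d + 1 = 0"
    proof -
      define r where "r = csqrt ((a + f)^2 - 4)"
      have "r * r = (a + f)*(a + f) - 4" unfolding r_def by (metis power2_csqrt power2_eq_square)
      moreover have "d^2 - (a + f)*d + 1 = (r * r - ((a + f)*(a + f) - 4)) / 4"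
        unfolding d_def r_def[symmetric] by (simp add: field_simps power2_eq_square)
      ultimately show ?thesis by simp
    qed
    then have "d \<noteq> 0" by auto
    have inv_d: "1/d = a + f - d" using char \<open>d \<noteq> 0\<close> by (simp add: field_simps power2_eq_square)
    define P where "P = mat2 (d - f) (-1/e) e 0"
    define Q where "Q = mat2 0 (1/e) (-e) (d - f)"
    have PQ: "P ** Q = mat 1" "Q ** P = mat 1" using False
      by (simp_all add: P_def Q_def mat2_mult mat_1_eq_mat2 mat2_eq_iff field_simps)
    define T where "T = Q ** g ** P"
    have "e * (a*f - b*e + d*d - a*d - d*f) = 0"
      using char det by (simp add: power2_eq_square algebra_simps)
    then have T: "T = utri d (T$1$2)"
      unfolding utri_def T_def P_def Q_def g inv_d using False char
      by (simp add: mat2_mult mat2_eq_iff field_simps)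
    have "P ** T ** Q = (P ** Q) ** g ** (P ** Q)" by (simp add: T_def matrix_mul_assoc)
    then have "g = P ** utri d (T$1$2) ** Q" using PQ T by simp
    then show ?thesis using PQ \<open>d \<noteq> 0\<close> by (intro that)
  qed
qed

section \<open>The words x^c_1 y ... x^c_N y\<close>

definition xy_word :: "int list \<Rightarrow> letter list" where
  "xy_word cs = concat (map (\<lambda>c. gen_pow GX c @ [(GY, False)]) cs)"

lemma xy_word_simps [simp]:
  "xy_word [] = []"
  "xy_word (c # cs) = gen_pow GX c @ (GY, False) # xy_word cs"
  "xy_word (cs @ ds) = xy_word cs @ xy_word ds"
  by (simp_all add: xy_word_def)

definition y_exponent :: "letter \<Rightarrow> int" where
  "y_exponent l = (if fst l = GY then (if snd l then -1 else 1) else 0)"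

lemma y_exponent_sum_freduce:
  "sum_list (map y_exponent (freduce w)) = sum_list (map y_exponent w)"
proof (induction w)
  case Nil
  then show ?case by simp
next
  case (Cons l w)
  note IH = Cons.IH
  show ?case
  proof (cases "freduce w")
    case Nil
    with IH show ?thesis by simp
  next
    case (Cons m r)
    show ?thesis
    proof (cases "m = inv_letter l")
      case True
      then have "y_exponent m = - y_exponent l" by (simp add: y_exponent_def inv_letter_def)
      with IH Cons True show ?thesis by simp
    next
      case False
      with IH Cons show ?thesis by simp
    qed
  qed
qed

lemma y_exponent_sum_xy_word: "sum_list (map y_exponent (xy_word cs)) = int (length cs)"
  by (induction cs) (simp_all add: gen_pow_def y_exponent_def sum_list_replicate)

lemma xy_word_nontrivial: "cs \<noteq> [] \<Longrightarrow> \<not> free_eq (xy_word cs) []"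
  using y_exponent_sum_freduce[of "xy_word cs"] y_exponent_sum_xy_word[of cs]
  by (auto simp: free_eq_def)

definition x_exponents :: "(nat \<Rightarrow> int) \<Rightarrow> (nat \<Rightarrow> int) \<Rightarrow> nat \<Rightarrow> int list" where
  "x_exponents a b k = concat (map (\<lambda>i. a i # replicate (nat (b i) - 1) 0) [0..<k])"

lemma word_w_eq_xy_word:
  assumes "\<forall>i<k. b i > 0"
  shows "word_w a b k = xy_word (x_exponents a b k)"
proof -
  have block: "xy_word (a i # replicate (nat (b i) - 1) 0) = gen_pow GX (a i) @ gen_pow GY (b i)"
    if "i < k" for i
  proof -
    have "b i > 0" using assms that by blast
    then obtain n where n: "nat (b i) = Suc n" by (metis gr0_implies_Suc zero_less_nat_eq)
    have "xy_word (replicate m 0) = replicate m (GY, False)" for m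
      by (induction m) (simp_all add: gen_pow_def)
    then show ?thesis using n \<open>b i > 0\<close> by (simp add: gen_pow_def)
  qed
  have "xy_word (concat xss) = concat (map xy_word xss)" for xss
    by (induction xss) simp_all
  then have "xy_word (x_exponents a b k)
      = concat (map (\<lambda>i. xy_word (a i # replicate (nat (b i) - 1) 0)) [0..<k])"
    by (simp add: x_exponents_def comp_def)
  also have "\<dots> = word_w a b k"
    unfolding word_w_def using block by (intro arg_cong[where f=concat] map_cong) auto
  finally show ?thesis by simp
qed

lemma word_eval_append: "word_eval A B (u @ v) = word_eval A B u ** word_eval A B v"
  by (induction u) (simp_all add: word_eval_def matrix_mul_assoc)

lemma word_eval_conj:
  assumes PQ: "P ** Q = mat 1" and QP: "Q ** P = mat 1"
    and A: "invertible A" and B: "invertible B"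
  shows "word_eval (P ** A ** Q) (P ** B ** Q) w = P ** word_eval A B w ** Q"
proof (induction w)
  case Nil
  then show ?case using PQ by (simp add: word_eval_def)
next
  case (Cons l w)
  have "letter_eval (P ** A ** Q) (P ** B ** Q) l = P ** letter_eval A B l ** Q"
    using matrix_inv_conj[OF PQ QP A] matrix_inv_conj[OF PQ QP B]
    by (simp add: letter_eval_def Let_def)
  then have "word_eval (P ** A ** Q) (P ** B ** Q) (l # w)
      = P ** (letter_eval A B l ** (Q ** P) ** word_eval A B w) ** Q"
    using Cons by (simp add: word_eval_def matrix_mul_assoc)
  then show ?case using QP by (simp add: word_eval_def matrix_mul_assoc)
qed

lemma word_eval_replicate_x:
  assumes "lam \<noteq> 0"
  shows "word_eval (utri lam 0) B (replicate n (GX, inverted)) = utri ((if inverted then 1/lam else lam) ^ n) 0"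
proof (induction n)
  case 0
  then show ?case by (simp add: word_eval_def mat_1_eq_utri)
next
  case (Suc n)
  have "letter_eval (utri lam 0) B (GX, inverted) = utri (if inverted then 1/lam else lam) 0"
    using assms by (simp add: letter_eval_def matrix_inv_utri)
  then show ?case using Suc assms by (simp add: word_eval_def utri_mult)
qed

lemma word_eval_gen_pow_x:
  "lam \<noteq> 0 \<Longrightarrow> word_eval (utri lam 0) B (gen_pow GX c) = utri (lam powi c) 0"
  by (simp add: gen_pow_def word_eval_replicate_x power_int_def power_inverse inverse_eq_divide)

definition corner_sum :: "complex \<Rightarrow> complex \<Rightarrow> int list \<Rightarrow> complex" where
  "corner_sum lam mu cs = (\<Sum>f<length cs. (lam powi sum_list (take (Suc f) cs))^2 * mu^(2*f))"

lemma corner_sum_Nil [simp]: "corner_sum lam mu [] = 0"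
  by (simp add: corner_sum_def)

lemma corner_sum_Cons:
  assumes "lam \<noteq> 0"
  shows "corner_sum lam mu (c # cs) = (lam powi c)^2 * (1 + mu^2 * corner_sum lam mu cs)"
proof -
  have "corner_sum lam mu (c # cs)
      = (\<Sum>f<Suc (length cs). (lam powi sum_list (take (Suc f) (c # cs)))^2 * mu^(2*f))"
    by (simp add: corner_sum_def)
  also have "\<dots> = (lam powi c)^2
      + (\<Sum>f<length cs. (lam powi sum_list (take (Suc (Suc f)) (c # cs)))^2 * mu^(2 * Suc f))"
    by (subst sum.lessThan_Suc_shift) simp
  also have "\<dots> = (lam powi c)^2
      + (\<Sum>f<length cs. (lam powi c)^2 * mu^2 * ((lam powi sum_list (take (Suc f) cs))^2 * mu^(2*f)))"
    using assms
    by (intro arg_cong2[where f="(+)"] refl sum.cong)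
       (simp_all add: power_int_add power_mult_distrib power_add mult_ac power2_eq_square)
  finally show ?thesis by (simp add: corner_sum_def sum_distrib_left algebra_simps)
qed

lemma word_eval_xy_word:
  assumes "lam \<noteq> 0" "mu \<noteq> 0"
  shows "word_eval (utri lam 0) (utri mu t) (xy_word cs)
    = utri (lam powi sum_list cs * mu ^ length cs)
        (t * mu * corner_sum lam mu cs / (lam powi sum_list cs * mu ^ length cs))"
proof (induction cs)
  case Nil
  then show ?case by (simp add: word_eval_def mat_1_eq_utri)
next
  case (Cons c cs)
  let ?E = "word_eval (utri lam 0) (utri mu t)"
  have y: "?E [(GY, False)] = utri mu t"
    using assms by (simp add: word_eval_def letter_eval_def mat_1_eq_utri utri_mult)
  have "?E (xy_word (c # cs)) = ?E (gen_pow GX c) ** (?E [(GY, False)] ** ?E (xy_word cs))"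
    by (simp add: word_eval_append[symmetric])
  also have "\<dots> = utri (lam powi c) 0 ** (utri mu t ** ?E (xy_word cs))"
    using assms y by (simp add: word_eval_gen_pow_x)
  finally show ?case
    using Cons assms by (simp add: utri_mult utri_eq_iff corner_sum_Cons power_int_add field_simps power2_eq_square)
qed

section \<open>Surjectivity from attainable diagonals\<close>

definition diag_attainable :: "int list \<Rightarrow> complex \<Rightarrow> bool" where
  "diag_attainable cs d \<longleftrightarrow> (\<exists>lam mu. lam \<noteq> 0 \<and> mu \<noteq> 0
     \<and> lam powi sum_list cs * mu ^ length cs = d \<and> corner_sum lam mu cs \<noteq> 0)"

lemma word_map_surjective_xy_word:
  assumes "\<And>d. d \<noteq> 0 \<Longrightarrow> diag_attainable cs d"
  shows "word_map_surjective (xy_word cs)"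
  unfolding word_map_surjective_def
proof
  fix g assume "g \<in> SL2"
  then have "det g = 1" by (simp add: SL2_def)
  then obtain P Q d c where PQ: "P ** Q = mat 1" "Q ** P = mat 1" and "d \<noteq> 0"
    and g: "g = P ** utri d c ** Q"
    by (rule SL2_conj_utri)
  then obtain lam mu where lm: "lam \<noteq> 0" "mu \<noteq> 0" "corner_sum lam mu cs \<noteq> 0"
    and diag: "lam powi sum_list cs * mu ^ length cs = d"
    using assms unfolding diag_attainable_def by blast
  define t where "t = c * d / (mu * corner_sum lam mu cs)"
  have "word_eval (utri lam 0) (utri mu t) (xy_word cs) = utri d c"
    using lm diag \<open>d \<noteq> 0\<close> by (simp add: word_eval_xy_word utri_eq_iff t_def)
  moreover have "invertible (utri x y)" "P ** utri x y ** Q \<in> SL2" if "x \<noteq> 0" for x y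
    using that det_utri[OF that] PQ det_mul[of P Q]
    by (simp_all add: invertible_det_nz SL2_def det_mul)
  ultimately show "\<exists>A\<in>SL2. \<exists>B\<in>SL2. word_eval A B (xy_word cs) = g"
    using word_eval_conj[OF PQ] lm g by metis
qed

lemma diag_attainable_unless_minus_one:
  assumes "cs \<noteq> []" "d \<noteq> 0" "d \<noteq> -1 \<or> odd (length cs)"
  shows "diag_attainable cs d"
proof -
  let ?N = "length cs"
  \<comment> \<open>For \<open>lam = 1\<close> the corner sum is a geometric series in \<open>mu\<^sup>2\<close>.\<close>
  have attain: "diag_attainable cs d" if "mu \<noteq> 0" "mu ^ ?N = d" "(\<Sum>f<?N. (mu^2)^f) \<noteq> 0" for mu
    unfolding diag_attainable_def corner_sum_def using that
    by (intro exI[of _ 1] exI[of _ mu]) (simp add: power_mult)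
  consider "d = 1" | "d = -1" "odd ?N" | "d \<noteq> 1" "d \<noteq> -1" using assms by blast
  then show ?thesis
  proof cases
    case 1
    then show ?thesis using assms(1) by (intro attain[of 1]) auto
  next
    case 2
    then show ?thesis using assms(1) by (intro attain[of "-1"]) auto
  next
    case 3
    define mu where "mu = exp (Ln d / of_nat ?N)"
    have mu: "mu ^ ?N = d" "mu \<noteq> 0"
      using assms by (simp_all add: mu_def exp_of_nat_mult[symmetric])
    have "mu^2 \<noteq> 1"
      using mu 3 by (metis power2_eq_1_iff power_minus_odd power_one power_minus_even)
    moreover have "(mu^2)^?N \<noteq> 1"
      using mu 3 by (metis power2_eq_1_iff power_mult power_mult_distrib mult.commute power_even_eq)
    ultimately show ?thesis using mu by (intro attain) (auto simp: sum_gp_strict)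
  qed
qed

section \<open>The exceptional diagonal entry \<open>-1\<close>\<close>

lemma sum_powi_eq_0_imp_coeff_classes_eq_0:
  fixes c :: "nat \<Rightarrow> 'a::field_char_0" and e :: "nat \<Rightarrow> int"
  assumes vanish: "\<And>x. x \<noteq> 0 \<Longrightarrow> (\<Sum>f<N. c f * x powi e f) = 0" and "f0 < N"
  shows "(\<Sum>f<N. if e f = e f0 then c f else 0) = 0"
proof -
  \<comment> \<open>Multiplying by \<open>x\<^sup>K\<close> turns the Laurent polynomial into an ordinary one.\<close>
  define K where "K = (\<Sum>f<N. \<bar>e f\<bar>)"
  have nonneg: "K + e f \<ge> 0" if "f < N" for f
    using member_le_sum[of f "{..<N}" "\<lambda>f. \<bar>e f\<bar>"] that by (auto simp: K_def)
  define p where "p = (\<Sum>f<N. monom (c f) (nat (K + e f)))"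
  have "poly p x = 0" if x: "x \<noteq> 0" for x
  proof -
    have "x ^ nat (K + e f) = x powi K * x powi e f" if "f < N" for f
    proof -
      have "x ^ nat (K + e f) = x powi (K + e f)" using nonneg[OF that] by (simp add: power_int_def)
      then show ?thesis by (simp add: power_int_add x)
    qed
    then have "poly p x = (\<Sum>f<N. x powi K * (c f * x powi e f))"
      unfolding p_def poly_sum poly_monom by (intro sum.cong) simp_all
    also have "\<dots> = 0" using vanish x by (simp add: sum_distrib_left[symmetric])
    finally show ?thesis .
  qed
  then have "infinite {x. poly p x = 0}"
    using infinite_UNIV_char_0 finite_subset[of "UNIV - {0}" "{x. poly p x = 0}"] by auto
  then have "p = 0" using poly_roots_finite by blast
  have "coeff p (nat (K + e f0)) = (\<Sum>f<N. if e f = e f0 then c f else 0)"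
    unfolding p_def coeff_sum coeff_monom
    using nonneg \<open>f0 < N\<close> by (intro sum.cong) (auto simp: eq_nat_nat_iff)
  then show ?thesis using \<open>p = 0\<close> by simp
qed

lemma poly_eq_0_if_vanishes_on_roots_of_minus_one:
  fixes R :: "complex poly"
  assumes "degree R < M" and "\<And>w. w ^ M = -1 \<Longrightarrow> poly R w = 0"
  shows "R = 0"
proof (rule ccontr)
  assume "R \<noteq> 0"
  have "{w. w ^ M = -1} \<subseteq> {w. poly R w = 0}" using assms(2) by auto
  then have "card {w::complex. w ^ M = -1} \<le> card {w. poly R w = 0}"
    by (rule card_mono[OF poly_roots_finite[OF \<open>R \<noteq> 0\<close>]])
  also have "\<dots> \<le> degree R" by (rule card_poly_roots_bound[OF \<open>R \<noteq> 0\<close>])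
  finally have "card {w::complex. w ^ M = -1} < M" using assms(1) by simp
  moreover have "M > 0" using assms(1) by simp
  ultimately show False using card_nth_roots[of "-1" M] by simp
qed

lemma periodic_if_vanishes_on_roots_of_minus_one:
  fixes c :: "nat \<Rightarrow> complex"
  assumes vanish: "\<And>w. w ^ M = -1 \<Longrightarrow> (\<Sum>f<2*M. c f * w ^ f) = 0" and "f < M"
  shows "c (f + M) = c f"
proof -
  define R where "R = (\<Sum>f<M. monom (c f - c (f + M)) f)"
  have "poly R w = 0" if w: "w ^ M = -1" for w
  proof -
    have "(\<Sum>f<2*M. c f * w ^ f) = (\<Sum>f<M. c f * w ^ f) + (\<Sum>f<M. c (f + M) * w ^ (f + M))"
      using sum.atLeastLessThan_concat[of 0 M "M + M" "\<lambda>f. c f * w ^ f"]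
        sum.shift_bounds_nat_ivl[of "\<lambda>f. c f * w ^ f" 0 M M]
      by (simp add: atLeast0LessThan mult_2)
    also have "\<dots> = (\<Sum>f<M. c f * w ^ f) - (\<Sum>f<M. c (f + M) * w ^ f)"
      using w by (simp add: power_add sum_negf)
    also have "\<dots> = poly R w"
      by (simp add: R_def poly_sum poly_monom left_diff_distrib sum_subtractf)
    finally show ?thesis using vanish[OF w] by simp
  qed
  moreover have "degree R < M"
    unfolding R_def using \<open>f < M\<close> by (intro degree_sum_less) (auto intro: le_less_trans[OF degree_monom_le])
  ultimately have "R = 0" by (rule poly_eq_0_if_vanishes_on_roots_of_minus_one[rotated])
  then have "coeff R f = 0" by simp
  moreover have "coeff R f = c f - c (f + M)"
    using \<open>f < M\<close> by (simp add: R_def coeff_sum coeff_monom)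
  ultimately show ?thesis by simp
qed

definition height :: "int list \<Rightarrow> nat \<Rightarrow> int" where
  "height cs f = int (length cs) * sum_list (take (Suc f) cs) - sum_list cs * int f"

lemma diag_param:
  fixes x z :: complex
  assumes "x \<noteq> 0"
  shows "(x ^ length cs) powi sum_list cs * (z * x powi (- sum_list cs)) ^ length cs = z ^ length cs"
proof -
  let ?N = "length cs" and ?a = "sum_list cs"
  have "(x ^ ?N) powi ?a * (z * x powi (- ?a)) ^ ?N = z ^ ?N * (x powi (int ?N * ?a) * x powi (- ?a * int ?N))"
    by (simp only: power_int_power power_mult_distrib power_int_power' mult_ac)
  also have "\<dots> = z ^ ?N" by (simp add: power_int_add[symmetric] assms)
  finally show ?thesis .
qed

lemma corner_sum_param:
  fixes x z :: complex
  assumes x: "x \<noteq> 0"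
  shows "corner_sum (x ^ length cs) (z * x powi (- sum_list cs)) cs
    = (\<Sum>f<length cs. (z^2)^f * x powi (2 * height cs f))"
  unfolding corner_sum_def
proof (rule sum.cong[OF refl])
  fix f
  let ?N = "length cs" and ?a = "sum_list cs" and ?p = "sum_list (take (Suc f) cs)"
  have lam: "((x ^ ?N) powi ?p)\<^sup>2 = x powi (int ?N * ?p * int 2)"
    by (simp only: power_int_power power_int_power')
  have mu: "(z * x powi (- ?a)) ^ (2 * f) = (z^2)^f * x powi (- ?a * int (2 * f))"
    by (simp only: power_mult_distrib power_mult power_int_power' of_nat_mult mult.assoc)
  have "int ?N * ?p * int 2 + - ?a * int (2 * f) = 2 * height cs f"
    by (simp add: height_def algebra_simps)
  then show "((x ^ ?N) powi ?p)\<^sup>2 * (z * x powi (- ?a)) ^ (2 * f) = (z^2)^f * x powi (2 * height cs f)"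
    unfolding lam mu by (simp add: power_int_add[OF disjI1[OF x], symmetric])
qed

lemma height_class_sum_eq_0:
  fixes z :: complex
  assumes bad: "\<not> diag_attainable cs (-1)" and z: "z ^ length cs = -1" and "f0 < length cs"
  shows "(\<Sum>f<length cs. if height cs f = height cs f0 then (z^2)^f else 0) = 0"
proof -
  have "z \<noteq> 0" using z \<open>f0 < length cs\<close> by (cases cs) auto
  have "(\<Sum>f<length cs. (z^2)^f * x powi (2 * height cs f)) = 0" if "x \<noteq> 0" for x
  proof -
    have "x ^ length cs \<noteq> 0" "z * x powi (- sum_list cs) \<noteq> 0" using that \<open>z \<noteq> 0\<close> by auto
    moreover have "(x ^ length cs) powi sum_list cs * (z * x powi (- sum_list cs)) ^ length cs = -1"
      using diag_param[OF that, of cs z] z by simp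
    ultimately have "corner_sum (x ^ length cs) (z * x powi (- sum_list cs)) cs = 0"
      using bad unfolding diag_attainable_def by blast
    then show ?thesis using corner_sum_param[OF that] by simp
  qed
  from sum_powi_eq_0_imp_coeff_classes_eq_0[OF this \<open>f0 < length cs\<close>] show ?thesis by simp
qed

lemma height_periodic:
  assumes bad: "\<not> diag_attainable cs (-1)" and len: "length cs = 2 * M" and "f < M"
  shows "height cs (f + M) = height cs f"
proof -
  define c where "c g = (if height cs g = height cs f then 1 else 0 :: complex)" for g
  have "(\<Sum>g<2*M. c g * w ^ g) = 0" if "w ^ M = -1" for w
  proof -
    have z: "csqrt w ^ length cs = -1" using that by (simp add: len power_mult)
    have "f < length cs" using \<open>f < M\<close> len by simp
    have "(\<Sum>g<2*M. c g * w ^ g)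
        = (\<Sum>g<length cs. if height cs g = height cs f then (csqrt w ^ 2) ^ g else 0)"
      using len by (intro sum.cong) (simp_all add: c_def)
    also have "\<dots> = 0" by (rule height_class_sum_eq_0[OF bad z \<open>f < length cs\<close>])
    finally show ?thesis .
  qed
  then have "c (f + M) = c f" using \<open>f < M\<close> by (rule periodic_if_vanishes_on_roots_of_minus_one)
  then show ?thesis by (auto simp: c_def split: if_splits)
qed

lemma square_if_height_periodic:
  assumes len: "length cs = 2 * M" and "M > 0"
    and periodic: "\<And>f. f < M \<Longrightarrow> height cs (f + M) = height cs f"
  shows "cs = take M cs @ take M cs"
proof -
  define P where "P j = sum_list (take j cs)" for j
  \<comment> \<open>Every window of length \<open>M\<close> carries half of the total sum.\<close>
  have half: "2 * (P (j + M) - P j) = sum_list cs" if "j \<le> M" for j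
  proof (cases j)
    case 0
    have "int (2*M) * P (Suc (M - 1 + M)) - sum_list cs * int (M - 1 + M)
        = int (2*M) * P (Suc (M - 1)) - sum_list cs * int (M - 1)"
      using periodic[of "M - 1"] \<open>M > 0\<close> len by (simp add: height_def P_def)
    moreover have "P (M + M) = sum_list cs" "P 0 = 0" using len by (simp_all add: P_def mult_2)
    ultimately have "int M * (2 * (P (M + M) - P M)) = int M * sum_list cs"
      using \<open>M > 0\<close> by (simp add: algebra_simps Suc_diff_Suc)
    then show ?thesis using 0 \<open>M > 0\<close> \<open>P 0 = 0\<close> \<open>P (M + M) = sum_list cs\<close> by simp
  next
    case (Suc f)
    have "int (2*M) * P (Suc (f + M)) - sum_list cs * int (f + M)
        = int (2*M) * P (Suc f) - sum_list cs * int f"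
      using periodic[of f] Suc that len by (simp add: height_def P_def)
    then have "int M * (2 * (P (Suc f + M) - P (Suc f))) = int M * sum_list cs"
      by (simp add: algebra_simps)
    then show ?thesis using Suc \<open>M > 0\<close> by simp
  qed
  have nth: "cs ! j = P (Suc j) - P j" if "j < length cs" for j
    using that by (simp add: P_def take_Suc_conv_app_nth)
  have "cs ! (M + j) = cs ! j" if "j < M" for j
  proof -
    have "2 * cs ! (M + j) = 2 * (P (Suc j + M) - P (j + M))"
      using nth[of "M + j"] that len by (simp add: ac_simps)
    also have "\<dots> = 2 * (P (Suc j) - P j)" using half[of "Suc j"] half[of j] that by simp
    also have "\<dots> = 2 * cs ! j" using nth[of j] that len by simp
    finally show ?thesis by simp
  qed
  then have "drop M cs = take M cs"
    by (intro nth_equalityI) (use len in auto)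
  then show ?thesis using append_take_drop_id[of M cs] by simp
qed

lemma xy_word_surjective_or_square:
  assumes "cs \<noteq> []"
  shows "word_map_surjective (xy_word cs) \<or> (\<exists>u. u \<noteq> [] \<and> cs = u @ u)"
proof (cases "diag_attainable cs (-1)")
  case True
  then show ?thesis
    using diag_attainable_unless_minus_one[OF assms] word_map_surjective_xy_word by metis
next
  case False
  then have "even (length cs)" using diag_attainable_unless_minus_one[OF assms, of "-1"] by auto
  then obtain M where len: "length cs = 2 * M" by (rule evenE)
  have "M > 0" using len assms by (cases M) auto
  have "cs = take M cs @ take M cs"
    by (rule square_if_height_periodic[OF len \<open>M > 0\<close> height_periodic[OF False len]])
  moreover have "take M cs \<noteq> []" using assms \<open>M > 0\<close> by (simp add: take_eq_Nil)
  ultimately show ?thesis by blast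
qed

theorem corollary1p4:
  fixes a b :: "nat \<Rightarrow> int" and k :: nat
  assumes "k \<ge> 1"
    and "\<forall>i<k. a i \<noteq> 0"
    and "\<forall>i<k. b i \<noteq> 0"
    and "\<forall>i<k. b i > 0"
  shows "word_map_surjective (word_w a b k)
         \<or> (\<exists>v. \<not> free_eq v [] \<and> free_eq (word_w a b k) (v @ v))"
proof -
  define cs where "cs = x_exponents a b k"
  have w: "word_w a b k = xy_word cs" unfolding cs_def using assms(4) by (rule word_w_eq_xy_word)
  have "cs \<noteq> []" using assms(1) by (simp add: cs_def x_exponents_def upt_conv_Cons)
  from xy_word_surjective_or_square[OF this] show ?thesis
  proof
    assume "word_map_surjective (xy_word cs)"
    then show ?thesis by (simp add: w)
  next
    assume "\<exists>u. u \<noteq> [] \<and> cs = u @ u"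
    then obtain u where "u \<noteq> []" "cs = u @ u" by blast
    then show ?thesis using xy_word_nontrivial[of u] w by (auto simp: free_eq_def)
  qed
qed

end
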